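(* Let $G$ be a graph and let $G_{(2)}$ be the graph obtained from $G$ by subdividing each edge an even number of times, i.e. each edge $uv$ of $G$ is replaced by an induced path between $u$ and $v$ having an even number of internal (new) vertices, these paths being internally vertex-disjoint. Then $G$ is $1$-extendable if and only if $G_{(2)}$ is $1$-extendable.
   Context: All graphs are finite, simple and undirected. A graph is $1$-extendable if every vertex belongs to some maximum independent set (an independent set of maximum size) of the graph. *)

theory Defs
  imports Main
begin

definition graph :: "'a set \<Rightarrow> ('a \<Rightarrow> 'a \<Rightarrow> bool) \<Rightarrow> bool" where
  "graph V E \<longleftrightarrow> finite V \<and> (\<forall>u v. E u v \<longrightarrow> E v u) \<and> (\<forall>u. \<not> E u u)
     \<and> (\<forall>u v. E u v \<longrightarrow> u \<in> V \<and> v \<in> V)"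

definition indep_set :: "'a set \<Rightarrow> ('a \<Rightarrow> 'a \<Rightarrow> bool) \<Rightarrow> 'a set \<Rightarrow> bool" where
  "indep_set V E S \<longleftrightarrow> S \<subseteq> V \<and> (\<forall>u\<in>S. \<forall>v\<in>S. \<not> E u v)"

definition max_indep_set :: "'a set \<Rightarrow> ('a \<Rightarrow> 'a \<Rightarrow> bool) \<Rightarrow> 'a set \<Rightarrow> bool" where
  "max_indep_set V E S \<longleftrightarrow> indep_set V E S \<and> (\<forall>T. indep_set V E T \<longrightarrow> card T \<le> card S)"

definition one_extendable :: "'a set \<Rightarrow> ('a \<Rightarrow> 'a \<Rightarrow> bool) \<Rightarrow> bool" where
  "one_extendable V E \<longleftrightarrow> (\<forall>v\<in>V. \<exists>S. max_indep_set V E S \<and> v \<in> S)"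

definition consec :: "'a list \<Rightarrow> 'a \<Rightarrow> 'a \<Rightarrow> bool" where
  "consec L a b \<longleftrightarrow> (\<exists>i. Suc i < length L \<and>
      ((L ! i = a \<and> L ! Suc i = b) \<or> (L ! i = b \<and> L ! Suc i = a)))"

text \<open>The edges of
(W,F) are exactly the consecutive pairs on these paths (so the paths are induced).\<close>
definition even_subdivision ::
  "'a set \<Rightarrow> ('a \<Rightarrow> 'a \<Rightarrow> bool) \<Rightarrow> 'a set \<Rightarrow> ('a \<Rightarrow> 'a \<Rightarrow> bool) \<Rightarrow> bool" where
  "even_subdivision V E W F \<longleftrightarrow> (\<exists>P :: 'a \<Rightarrow> 'a \<Rightarrow> 'a list.
     (\<forall>u v. E u v \<longrightarrow> P v u = rev (P u v)) \<and>
     (\<forall>u v. E u v \<longrightarrow> distinct (P u v) \<and> even (length (P u v)) \<and> set (P u v) \<inter> V = {}) \<and>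
     (\<forall>u v x y. E u v \<longrightarrow> E x y \<longrightarrow> {u, v} \<noteq> {x, y} \<longrightarrow> set (P u v) \<inter> set (P x y) = {}) \<and>
     W = V \<union> (\<Union>{set (P u v) | u v. E u v}) \<and>
     (\<forall>a b. F a b \<longleftrightarrow> (\<exists>u v. E u v \<and> consec (u # P u v @ [v]) a b)))"

end

theory Submission
  imports Defs
begin

(* Subdividing an edge uv by 2k new vertices raises the independence number by exactly k.
   An independent set S of G is lifted by orienting every edge towards an end outside S and
   taking, on each path, every second internal vertex, ending next to that head.  Conversely,
   an independent set T of the subdivision meets the path of uv in at most k vertices, and in
   at most k - 1 if both u and v lie in T; so dropping from T the head of every arc with both
   ends in T leaves an independent set of G with at least |T| - |W - V|/2 vertices.  Hence
   lifting and contracting preserve maximum independent sets.  An old vertex is covered by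
   contracting along an orientation with all arcs leaving it; a new vertex sits at an odd
   position of its path read from one end u, and is covered by lifting a maximum independent
   set containing u. *)

section \<open>Consecutive entries of lists\<close>

lemma consec_mem_set: "consec xs a b \<Longrightarrow> a \<in> set xs \<and> b \<in> set xs"
  unfolding consec_def by (auto intro: nth_mem)

lemma consec_Cons:
  assumes "consec xs a b"
  shows "consec (x # xs) a b"
proof -
  obtain i where "Suc i < length xs" "(xs ! i = a \<and> xs ! Suc i = b) \<or> (xs ! i = b \<and> xs ! Suc i = a)"
    using assms unfolding consec_def by blast
  then show ?thesis unfolding consec_def by (intro exI[of _ "Suc i"]) auto
qed

lemma consec_append:
  assumes "consec xs a b"
  shows "consec (xs @ ys) a b"
proof -
  obtain i where "Suc i < length xs" "(xs ! i = a \<and> xs ! Suc i = b) \<or> (xs ! i = b \<and> xs ! Suc i = a)"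
    using assms unfolding consec_def by blast
  then show ?thesis unfolding consec_def by (intro exI[of _ i]) (auto simp: nth_append)
qed

lemma consec_Cons_Cons: "consec (x # y # xs) x y"
  unfolding consec_def by (intro exI[of _ 0]) simp

lemma consec_rev:
  assumes "consec xs a b"
  shows "consec (rev xs) a b"
proof -
  obtain i where i: "Suc i < length xs"
    and ab: "(xs ! i = a \<and> xs ! Suc i = b) \<or> (xs ! i = b \<and> xs ! Suc i = a)"
    using assms unfolding consec_def by blast
  define j where "j = length xs - Suc (Suc i)"
  have "Suc j < length xs" "rev xs ! j = xs ! Suc i" "rev xs ! Suc j = xs ! i"
    using i by (simp_all add: j_def rev_nth Suc_diff_Suc)
  then show ?thesis
    using ab unfolding consec_def length_rev by blast
qed

lemma consec_distinct_nth:
  assumes "distinct xs" "i < length xs" "j < length xs" "consec xs (xs ! i) (xs ! j)"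
  shows "j = Suc i \<or> i = Suc j"
proof -
  obtain k where k: "Suc k < length xs"
    "(xs ! k = xs ! i \<and> xs ! Suc k = xs ! j) \<or> (xs ! k = xs ! j \<and> xs ! Suc k = xs ! i)"
    using assms(4) unfolding consec_def by blast
  then show ?thesis
    using assms(1-3) by (auto simp: nth_eq_iff_index_eq)
qed

lemma card_inter_set_le_if_not_consec:
  "(\<And>a b. consec xs a b \<Longrightarrow> a \<notin> T \<or> b \<notin> T) \<Longrightarrow> card (T \<inter> set xs) \<le> (length xs + 1) div 2"
proof (induction xs rule: induct_list012)
  case 1
  then show ?case by simp
next
  case (2 x)
  have "card (T \<inter> {x}) \<le> card {x}" by (rule card_mono) auto
  then show ?case by simp
next
  case (3 x y xs)
  have IH1: "card (T \<inter> set xs) \<le> (length xs + 1) div 2"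
    using 3 by (meson consec_Cons)
  have IH2: "card (T \<inter> set (y # xs)) \<le> (length (y # xs) + 1) div 2"
    using 3 by (meson consec_Cons)
  show ?case
  proof (cases "x \<in> T")
    case True
    then have "y \<notin> T" using "3.prems"[OF consec_Cons_Cons] by blast
    then have "T \<inter> set (x # y # xs) \<subseteq> insert x (T \<inter> set xs)" by auto
    then have "card (T \<inter> set (x # y # xs)) \<le> card (insert x (T \<inter> set xs))"
      by (intro card_mono) auto
    also have "\<dots> \<le> Suc (card (T \<inter> set xs))" by (simp add: card_insert_if)
    finally show ?thesis using IH1 by simp
  next
    case False
    then have "T \<inter> set (x # y # xs) = T \<inter> set (y # xs)" by auto
    then show ?thesis using IH2 by simp
  qed
qed

definition odd_entries :: "'a list \<Rightarrow> 'a set" where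
  "odd_entries xs = {xs ! j | j. odd j \<and> j < length xs}"

lemma odd_entries_subset: "odd_entries xs \<subseteq> set xs"
  unfolding odd_entries_def by auto

lemma card_odd_entries:
  assumes "distinct xs"
  shows "card (odd_entries xs) = length xs div 2"
proof -
  have "odd_entries xs = (\<lambda>k. xs ! (2 * k + 1)) ` {..<length xs div 2}"
    unfolding odd_entries_def by (auto elim!: oddE intro!: image_eqI)
  moreover have "inj_on (\<lambda>k. xs ! (2 * k + 1)) {..<length xs div 2}"
    by (rule inj_onI) (auto simp: nth_eq_iff_index_eq[OF assms])
  ultimately show ?thesis by (simp add: card_image)
qed

lemma mem_odd_entries_or_rev:
  assumes "even (length xs)" "x \<in> set xs"
  shows "x \<in> odd_entries xs \<or> x \<in> odd_entries (rev xs)"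
proof -
  obtain i where i: "i < length xs" "x = xs ! i" using assms(2) by (metis in_set_conv_nth)
  show ?thesis
  proof (cases "odd i")
    case True
    then show ?thesis using i unfolding odd_entries_def by blast
  next
    case False
    let ?j = "length xs - Suc i"
    have "odd ?j" "?j < length (rev xs)" "rev xs ! ?j = x"
      using assms(1) False i by (auto simp: rev_nth)
    then show ?thesis unfolding odd_entries_def by blast
  qed
qed

lemma not_consec_odd_entries:
  assumes "distinct (x # xs @ ys)"
    and "a \<in> insert x (odd_entries xs)" "b \<in> insert x (odd_entries xs)"
  shows "\<not> consec (x # xs @ ys) a b"
proof
  let ?zs = "x # xs @ ys"
  have even_position: "\<exists>i. even i \<and> i < length ?zs \<and> c = ?zs ! i"
    if c: "c \<in> insert x (odd_entries xs)" for c
  proof (cases "c = x")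
    case True
    then show ?thesis by (intro exI[of _ 0]) simp
  next
    case False
    then obtain j where "odd j" "j < length xs" "c = xs ! j"
      using c unfolding odd_entries_def by blast
    then show ?thesis by (intro exI[of _ "Suc j"]) (simp add: nth_append)
  qed
  obtain i j where ij: "even i" "even j" "i < length ?zs" "j < length ?zs" "a = ?zs ! i" "b = ?zs ! j"
    using even_position assms(2,3) by meson
  assume "consec ?zs a b"
  then have "consec ?zs (?zs ! i) (?zs ! j)" using ij(5,6) by simp
  then have "j = Suc i \<or> i = Suc j" by (rule consec_distinct_nth[OF assms(1) ij(3,4)])
  with ij(1,2) show False by auto
qed

section \<open>Orientations\<close>

definition orientation :: "('a \<Rightarrow> 'a \<Rightarrow> bool) \<Rightarrow> ('a \<times> 'a) set \<Rightarrow> bool" where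
  "orientation E A \<longleftrightarrow> (\<forall>(u, v) \<in> A. E u v) \<and> (\<forall>u v. E u v \<longrightarrow> ((u, v) \<in> A \<longleftrightarrow> (v, u) \<notin> A))"

lemma orientation_exists:
  assumes sym: "\<And>u v. E u v \<Longrightarrow> E v u" and irrefl: "\<And>u. \<not> E u u"
    and choice: "\<And>u v. E u v \<Longrightarrow> Q u v \<or> Q v u"
  shows "\<exists>A. orientation E A \<and> (\<forall>(u, v) \<in> A. Q u v)"
proof -
  obtain r :: "'a rel" where r: "Well_order r" "Field r = UNIV"
    using well_ordering by metis
  have total: "(u, v) \<in> r \<longleftrightarrow> (v, u) \<notin> r" if "u \<noteq> v" for u v
    using r that unfolding well_order_on_def linear_order_on_def partial_order_on_def
      total_on_def antisym_def by blast
  define A where "A = {(u, v). E u v \<and> Q u v \<and> (Q v u \<longrightarrow> (u, v) \<in> r)}"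
  have "orientation E A"
    unfolding orientation_def
  proof (intro conjI allI impI)
    show "\<forall>(u, v) \<in> A. E u v" unfolding A_def by blast
  next
    fix u v assume uv: "E u v"
    have "u \<noteq> v" using uv irrefl by blast
    then show "(u, v) \<in> A \<longleftrightarrow> (v, u) \<notin> A"
      unfolding A_def using uv sym[OF uv] choice[OF uv] total[of u v] by auto
  qed
  moreover have "\<forall>(u, v) \<in> A. Q u v" unfolding A_def by blast
  ultimately show ?thesis by blast
qed

lemma orientation_arc: "orientation E A \<Longrightarrow> (u, v) \<in> A \<Longrightarrow> E u v"
  unfolding orientation_def by blast

lemma orientation_edge: "orientation E A \<Longrightarrow> E u v \<Longrightarrow> (u, v) \<in> A \<or> (v, u) \<in> A"
  unfolding orientation_def by blast

lemma orientation_antisym: "orientation E A \<Longrightarrow> (u, v) \<in> A \<Longrightarrow> (v, u) \<notin> A"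
  unfolding orientation_def by blast

lemma orientation_eq_if_same_ends:
  "orientation E A \<Longrightarrow> (u, v) \<in> A \<Longrightarrow> (x, y) \<in> A \<Longrightarrow> {u, v} = {x, y} \<Longrightarrow> (u, v) = (x, y)"
  by (auto simp: doubleton_eq_iff dest: orientation_antisym)

section \<open>Even subdivisions\<close>

locale subdivided_graph =
  fixes V :: "'a set" and E :: "'a \<Rightarrow> 'a \<Rightarrow> bool" and W :: "'a set"
    and F :: "'a \<Rightarrow> 'a \<Rightarrow> bool" and P :: "'a \<Rightarrow> 'a \<Rightarrow> 'a list"
  assumes finite_V: "finite V"
    and edge_sym: "E u v \<Longrightarrow> E v u"
    and edge_irrefl: "\<not> E u u"
    and edge_in_V: "E u v \<Longrightarrow> u \<in> V \<and> v \<in> V"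
    and path_rev: "E u v \<Longrightarrow> P v u = rev (P u v)"
    and distinct_path: "E u v \<Longrightarrow> distinct (P u v)"
    and even_length_path: "E u v \<Longrightarrow> even (length (P u v))"
    and path_disjoint_V: "E u v \<Longrightarrow> set (P u v) \<inter> V = {}"
    and paths_disjoint: "E u v \<Longrightarrow> E x y \<Longrightarrow> {u, v} \<noteq> {x, y} \<Longrightarrow> set (P u v) \<inter> set (P x y) = {}"
    and W_eq: "W = V \<union> \<Union>{set (P u v) | u v. E u v}"
    and F_iff: "F a b \<longleftrightarrow> (\<exists>u v. E u v \<and> consec (u # P u v @ [v]) a b)"

lemma subdivided_graph_if_even_subdivision:
  assumes "graph V E" "even_subdivision V E W F"
  shows "\<exists>P. subdivided_graph V E W F P"
proof -
  obtain P :: "'a \<Rightarrow> 'a \<Rightarrow> 'a list" where P: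
    "\<forall>u v. E u v \<longrightarrow> P v u = rev (P u v)"
    "\<forall>u v. E u v \<longrightarrow> distinct (P u v) \<and> even (length (P u v)) \<and> set (P u v) \<inter> V = {}"
    "\<forall>u v x y. E u v \<longrightarrow> E x y \<longrightarrow> {u, v} \<noteq> {x, y} \<longrightarrow> set (P u v) \<inter> set (P x y) = {}"
    "W = V \<union> \<Union>{set (P u v) | u v. E u v}"
    "\<forall>a b. F a b \<longleftrightarrow> (\<exists>u v. E u v \<and> consec (u # P u v @ [v]) a b)"
    using assms(2) unfolding even_subdivision_def by blast
  have G: "finite V" "\<And>u v. E u v \<Longrightarrow> E v u" "\<And>u. \<not> E u u" "\<And>u v. E u v \<Longrightarrow> u \<in> V \<and> v \<in> V"
    using assms(1) unfolding graph_def by blast+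
  have "subdivided_graph V E W F P"
    by unfold_locales (use P G in metis)+
  then show ?thesis by blast
qed

context subdivided_graph
begin

lemma distinct_full_path:
  assumes "E u v"
  shows "distinct (u # P u v @ [v])"
  using distinct_path[OF assms] path_disjoint_V[OF assms] edge_in_V[OF assms] edge_irrefl[of u]
    assms by auto

lemma orientation_avoiding:
  assumes "indep_set V E S"
  shows "\<exists>A. orientation E A \<and> (\<forall>(u, v) \<in> A. v \<notin> S)"
  using assms unfolding indep_set_def
  by (intro orientation_exists[OF edge_sym edge_irrefl]) blast+

lemma finite_orientation:
  assumes "orientation E A"
  shows "finite A"
proof (rule finite_subset)
  show "A \<subseteq> V \<times> V" using edge_in_V orientation_arc[OF assms] by auto
qed (simp add: finite_V)

lemma paths_disjoint_orientation:
  "orientation E A \<Longrightarrow> (u, v) \<in> A \<Longrightarrow> (x, y) \<in> A \<Longrightarrow> (u, v) \<noteq> (x, y) \<Longrightarrow>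
    set (P u v) \<inter> set (P x y) = {}"
  using paths_disjoint orientation_eq_if_same_ends orientation_arc by metis

lemma new_vertices_orientation:
  assumes A: "orientation E A"
  shows "W - V = (\<Union>(u, v) \<in> A. set (P u v))"
proof -
  have "set (P u v) \<subseteq> (\<Union>(u, v) \<in> A. set (P u v))" if "E u v" for u v
    using orientation_edge[OF A that] path_rev[OF that] by auto
  then show ?thesis
    using W_eq path_disjoint_V orientation_arc[OF A] by fastforce
qed

lemma F_on_arc_path:
  assumes A: "orientation E A" and "F a b"
  shows "\<exists>(u, v) \<in> A. consec (u # P u v @ [v]) a b"
proof -
  obtain u v where uv: "E u v" "consec (u # P u v @ [v]) a b"
    using assms(2) F_iff by blast
  have "v # P v u @ [u] = rev (u # P u v @ [v])"
    using path_rev[OF uv(1)] by simp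
  then have "consec (v # P v u @ [u]) a b"
    using consec_rev[OF uv(2)] by simp
  then show ?thesis
    using orientation_edge[OF A uv(1)] uv(2) by blast
qed

lemma sum_half_path_length:
  assumes A: "orientation E A"
  shows "(\<Sum>(u, v) \<in> A. length (P u v) div 2) = card (W - V) div 2"
proof -
  have "\<forall>p \<in> A. \<forall>q \<in> A. p \<noteq> q \<longrightarrow> (case p of (u, v) \<Rightarrow> set (P u v)) \<inter> (case q of (u, v) \<Rightarrow> set (P u v)) = {}"
    using paths_disjoint_orientation[OF A] by fast
  then have "card (W - V) = (\<Sum>(u, v) \<in> A. card (set (P u v)))"
    unfolding new_vertices_orientation[OF A]
    by (subst card_UN_disjoint[OF finite_orientation[OF A]]) (auto simp: split_def)
  also have "\<dots> = 2 * (\<Sum>(u, v) \<in> A. length (P u v) div 2)"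
    unfolding sum_distrib_left
    by (intro sum.cong) (auto dest!: orientation_arc[OF A] simp: distinct_card[OF distinct_path]
        even_length_path)
  finally show ?thesis by simp
qed

definition lift :: "'a set \<Rightarrow> ('a \<times> 'a) set \<Rightarrow> 'a set" where
  "lift S A = S \<union> (\<Union>(u, v) \<in> A. odd_entries (P u v))"

lemma indep_set_lift:
  assumes S: "indep_set V E S" and A: "orientation E A" and heads: "\<forall>(u, v) \<in> A. v \<notin> S"
  shows "indep_set W F (lift S A)"
proof -
  have lift_on_path: "lift S A \<inter> set (u # P u v @ [v]) \<subseteq> insert u (odd_entries (P u v))"
    if uv: "(u, v) \<in> A" for u v
  proof
    fix x assume x: "x \<in> lift S A \<inter> set (u # P u v @ [v])"
    have "E u v" using orientation_arc[OF A uv] .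
    then have "v \<in> V" "set (P u v) \<inter> V = {}"
      using edge_in_V path_disjoint_V by auto
    from x consider "x \<in> S" | u' v' where "(u', v') \<in> A" "x \<in> odd_entries (P u' v')"
      unfolding lift_def by blast
    then show "x \<in> insert u (odd_entries (P u v))"
    proof cases
      case 1
      then have "x \<in> V" "x \<noteq> v" using S heads uv unfolding indep_set_def by auto
      then show ?thesis using x \<open>set (P u v) \<inter> V = {}\<close> by auto
    next
      case (2 u' v')
      have x': "x \<in> set (P u' v')" using 2(2) by (rule odd_entries_subset[THEN subsetD])
      then have "x \<notin> V" using path_disjoint_V[OF orientation_arc[OF A 2(1)]] by blast
      then have "x \<in> set (P u v)" using x \<open>v \<in> V\<close> edge_in_V[OF \<open>E u v\<close>] by auto
      then have "(u', v') = (u, v)"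
        using paths_disjoint_orientation[OF A uv 2(1)] x' by blast
      then show ?thesis using 2 by simp
    qed
  qed
  have "lift S A \<subseteq> W"
  proof -
    have "S \<subseteq> W" using S W_eq unfolding indep_set_def by blast
    moreover have "odd_entries (P u v) \<subseteq> W" if "(u, v) \<in> A" for u v
    proof -
      have "set (P u v) \<subseteq> W - V"
        unfolding new_vertices_orientation[OF A] using that by blast
      then show ?thesis using odd_entries_subset[of "P u v"] by blast
    qed
    ultimately show ?thesis unfolding lift_def by blast
  qed
  moreover have "\<not> F a b" if "a \<in> lift S A" "b \<in> lift S A" for a b
  proof
    assume "F a b"
    then obtain u v where uv: "(u, v) \<in> A" "consec (u # P u v @ [v]) a b"
      using F_on_arc_path[OF A] by blast
    then show False
      using not_consec_odd_entries[OF distinct_full_path[OF orientation_arc[OF A uv(1)]]]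
        lift_on_path[OF uv(1)] consec_mem_set[OF uv(2)] that by blast
  qed
  ultimately show ?thesis unfolding indep_set_def by blast
qed

lemma card_lift:
  assumes S: "S \<subseteq> V" and A: "orientation E A"
  shows "card (lift S A) = card S + card (W - V) div 2"
proof -
  let ?N = "\<Union>(u, v) \<in> A. odd_entries (P u v)"
  have "?N \<subseteq> W - V"
    unfolding new_vertices_orientation[OF A] using odd_entries_subset by fast
  then have "S \<inter> ?N = {}" using S by blast
  moreover have "finite S" using S finite_V by (rule finite_subset)
  moreover have "finite ?N"
    using finite_orientation[OF A] unfolding odd_entries_def by auto
  ultimately have "card (lift S A) = card S + card ?N"
    unfolding lift_def by (rule card_Un_disjoint[rotated 2])
  moreover have "card ?N = (\<Sum>(u, v) \<in> A. card (odd_entries (P u v)))"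
  proof -
    have "\<forall>p \<in> A. \<forall>q \<in> A. p \<noteq> q \<longrightarrow>
        (case p of (u, v) \<Rightarrow> odd_entries (P u v)) \<inter> (case q of (u, v) \<Rightarrow> odd_entries (P u v)) = {}"
      using paths_disjoint_orientation[OF A] odd_entries_subset by fast
    then show ?thesis
      by (subst card_UN_disjoint[OF finite_orientation[OF A]]) (auto simp: split_def odd_entries_def)
  qed
  moreover have "(\<Sum>(u, v) \<in> A. card (odd_entries (P u v))) = (\<Sum>(u, v) \<in> A. length (P u v) div 2)"
    by (intro sum.cong) (auto dest!: orientation_arc[OF A] simp: card_odd_entries distinct_path)
  ultimately show ?thesis
    using sum_half_path_length[OF A] by simp
qed

lemma finite_W: "finite W"
proof -
  obtain A where A: "orientation E A"
    using orientation_avoiding[of "{}"] unfolding indep_set_def by blast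
  have "finite (W - V)"
    unfolding new_vertices_orientation[OF A] using finite_orientation[OF A] by auto
  then show ?thesis using finite_V finite_Diff2 by blast
qed

lemma card_indep_on_path:
  assumes T: "indep_set W F T" and uv: "E u v"
  shows "card (T \<inter> set (P u v)) + (if u \<in> T \<and> v \<in> T then 1 else 0) \<le> length (P u v) div 2"
proof -
  let ?path = "u # P u v @ [v]"
  have not_both: "a \<notin> T \<or> b \<notin> T" if "consec ?path a b" for a b
    using T uv that F_iff unfolding indep_set_def by blast
  have even: "even (length (P u v))" by (rule even_length_path[OF uv])
  show ?thesis
  proof (cases "u \<in> T \<and> v \<in> T")
    case False
    have "card (T \<inter> set (P u v)) \<le> (length (P u v) + 1) div 2"
    proof (rule card_inter_set_le_if_not_consec)
      fix a b assume "consec (P u v) a b"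
      then have "consec ?path a b" by (intro consec_Cons consec_append)
      then show "a \<notin> T \<or> b \<notin> T" by (rule not_both)
    qed
    then show ?thesis using False even by auto
  next
    case True
    have "u \<notin> set (P u v)" "v \<notin> set (P u v)" "u \<noteq> v"
      using distinct_full_path[OF uv] by auto
    then have "card (T \<inter> set ?path) = card (T \<inter> set (P u v)) + 2"
      using True by (simp add: Int_insert_right)
    moreover have "card (T \<inter> set ?path) \<le> (length ?path + 1) div 2"
      using not_both by (rule card_inter_set_le_if_not_consec)
    ultimately show ?thesis using True even by simp
  qed
qed

definition contraction :: "'a set \<Rightarrow> ('a \<times> 'a) set \<Rightarrow> 'a set" where
  "contraction T A = {v \<in> T \<inter> V. \<forall>u \<in> T. (u, v) \<notin> A}"

lemma indep_set_contraction:
  assumes A: "orientation E A"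
  shows "indep_set V E (contraction T A)"
  unfolding indep_set_def contraction_def
  using orientation_edge[OF A] by blast

lemma card_le_card_contraction:
  assumes T: "indep_set W F T" and A: "orientation E A"
  shows "card T \<le> card (contraction T A) + card (W - V) div 2"
proof -
  define B where "B = {(u, v) \<in> A. u \<in> T \<and> v \<in> T}"
  have fin: "finite A" "finite B" "finite T"
    using finite_orientation[OF A] T finite_subset[OF _ finite_W]
    unfolding B_def indep_set_def by (auto intro: finite_subset[of _ A])
  have "card (T \<inter> V) \<le> card (contraction T A) + card B"
  proof -
    have "T \<inter> V \<subseteq> contraction T A \<union> snd ` B"
      unfolding contraction_def B_def by force
    then have "card (T \<inter> V) \<le> card (contraction T A \<union> snd ` B)"
      by (rule card_mono[rotated]) (simp add: fin contraction_def finite_V)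
    also have "\<dots> \<le> card (contraction T A) + card B"
      using card_Un_le card_image_le[OF fin(2), of snd] by (meson add_left_mono order_trans)
    finally show ?thesis .
  qed
  moreover have "card (T - V) + card B \<le> card (W - V) div 2"
  proof -
    have "T - V = T \<inter> (W - V)" using T unfolding indep_set_def by blast
    also have "\<dots> = (\<Union>(u, v) \<in> A. T \<inter> set (P u v))"
      unfolding new_vertices_orientation[OF A] by auto
    finally have "card (T - V) \<le> (\<Sum>(u, v) \<in> A. card (T \<inter> set (P u v)))"
      using card_UN_le[OF fin(1), of "\<lambda>(u, v). T \<inter> set (P u v)"]
      by (simp only: prod.case_distrib[of card])
    moreover have "card B = (\<Sum>(u, v) \<in> A. if u \<in> T \<and> v \<in> T then 1 else 0)"
      unfolding B_def using sum.inter_filter[OF fin(1), of "\<lambda>_. 1::nat"] by (simp add: split_def)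
    moreover have "(\<Sum>(u, v) \<in> A. card (T \<inter> set (P u v)) + (if u \<in> T \<and> v \<in> T then 1 else 0))
        \<le> (\<Sum>(u, v) \<in> A. length (P u v) div 2)"
      by (intro sum_mono) (auto dest!: orientation_arc[OF A] intro: card_indep_on_path[OF T])
    ultimately show ?thesis
      using sum_half_path_length[OF A] by (simp add: sum.distrib split_def)
  qed
  moreover have "card T = card (T \<inter> V) + card (T - V)"
    using card_Int_Diff[OF fin(3)] .
  ultimately show ?thesis by linarith
qed

lemma max_indep_set_lift:
  assumes S: "max_indep_set V E S" and A: "orientation E A" and heads: "\<forall>(u, v) \<in> A. v \<notin> S"
  shows "max_indep_set W F (lift S A)"
  unfolding max_indep_set_def
proof (intro conjI allI impI)
  have S_indep: "indep_set V E S" using S unfolding max_indep_set_def by blast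
  then show "indep_set W F (lift S A)" by (rule indep_set_lift[OF _ A heads])
  fix T assume T: "indep_set W F T"
  have "card (contraction T A) \<le> card S"
    using S indep_set_contraction[OF A] unfolding max_indep_set_def by blast
  then show "card T \<le> card (lift S A)"
    using card_le_card_contraction[OF T A] card_lift[OF _ A] S_indep
    unfolding indep_set_def by fastforce
qed

lemma max_indep_set_contraction:
  assumes T: "max_indep_set W F T" and A: "orientation E A"
  shows "max_indep_set V E (contraction T A)"
  unfolding max_indep_set_def
proof (intro conjI allI impI)
  show "indep_set V E (contraction T A)" by (rule indep_set_contraction[OF A])
  fix S assume S: "indep_set V E S"
  obtain A' where A': "orientation E A'" "\<forall>(u, v) \<in> A'. v \<notin> S"
    using orientation_avoiding[OF S] by blast
  have "card (lift S A') \<le> card T"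
    using T indep_set_lift[OF S A'] unfolding max_indep_set_def by blast
  moreover have "card (lift S A') = card S + card (W - V) div 2"
    using S card_lift[OF _ A'(1)] unfolding indep_set_def by blast
  moreover have "card T \<le> card (contraction T A) + card (W - V) div 2"
    using T card_le_card_contraction[OF _ A] unfolding max_indep_set_def by blast
  ultimately show "card S \<le> card (contraction T A)" by linarith
qed

lemma new_vertex_odd_entry:
  assumes "x \<in> W - V"
  shows "\<exists>u v. E u v \<and> x \<in> odd_entries (P u v)"
proof -
  obtain u v where uv: "E u v" "x \<in> set (P u v)" using assms W_eq by blast
  then have "x \<in> odd_entries (P u v) \<or> x \<in> odd_entries (P v u)"
    using mem_odd_entries_or_rev even_length_path path_rev by metis
  then show ?thesis using uv(1) edge_sym by blast
qed

lemma one_extendable_subdivision: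
  assumes "one_extendable V E"
  shows "one_extendable W F"
  unfolding one_extendable_def
proof
  fix x assume "x \<in> W"
  obtain S A where S: "max_indep_set V E S" and A: "orientation E A" "\<forall>(u, v) \<in> A. v \<notin> S"
    and x: "x \<in> lift S A"
  proof (cases "x \<in> V")
    case True
    then obtain S where S: "max_indep_set V E S" "x \<in> S"
      using assms unfolding one_extendable_def by blast
    moreover obtain A where "orientation E A" "\<forall>(u, v) \<in> A. v \<notin> S"
      using orientation_avoiding S unfolding max_indep_set_def by blast
    ultimately show ?thesis using that unfolding lift_def by blast
  next
    case False
    then obtain u v where uv: "E u v" "x \<in> odd_entries (P u v)"
      using new_vertex_odd_entry \<open>x \<in> W\<close> by blast
    obtain S where S: "max_indep_set V E S" "u \<in> S"
      using assms edge_in_V[OF uv(1)] unfolding one_extendable_def by blast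
    obtain A where A: "orientation E A" "\<forall>(u, v) \<in> A. v \<notin> S"
      using orientation_avoiding S unfolding max_indep_set_def by blast
    \<comment> \<open>the arc must leave u, because heads avoid S\<close>
    have "(u, v) \<in> A" using orientation_edge[OF A(1) uv(1)] A(2) S(2) by blast
    then have "x \<in> lift S A" using uv(2) unfolding lift_def by blast
    then show ?thesis using that S A by blast
  qed
  then show "\<exists>T. max_indep_set W F T \<and> x \<in> T"
    using max_indep_set_lift[OF S A] by blast
qed

lemma one_extendable_of_subdivision:
  assumes "one_extendable W F"
  shows "one_extendable V E"
  unfolding one_extendable_def
proof
  fix x assume "x \<in> V"
  then obtain T where T: "max_indep_set W F T" "x \<in> T"
    using assms W_eq unfolding one_extendable_def by blast
  obtain A where A: "orientation E A" "\<forall>(u, v) \<in> A. v \<noteq> x"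
    using orientation_exists[of E "\<lambda>_ v. v \<noteq> x"] edge_sym edge_irrefl by metis
  have "x \<in> contraction T A" using \<open>x \<in> V\<close> T(2) A(2) unfolding contraction_def by blast
  then show "\<exists>S. max_indep_set V E S \<and> x \<in> S"
    using max_indep_set_contraction[OF T(1) A(1)] by blast
qed

lemma one_extendable_iff: "one_extendable V E \<longleftrightarrow> one_extendable W F"
  using one_extendable_subdivision one_extendable_of_subdivision by blast

end

theorem lemma3:
  fixes V W :: "'a set" and E F :: "'a \<Rightarrow> 'a \<Rightarrow> bool"
  assumes "graph V E"
    and "even_subdivision V E W F"
  shows "one_extendable V E \<longleftrightarrow> one_extendable W F"
proof -
  obtain P where "subdivided_graph V E W F P"
    using subdivided_graph_if_even_subdivision[OF assms] by blast
  then show ?thesis by (rule subdivided_graph.one_extendable_iff)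
qed

end
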